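(* Let $S\in V_{\mathrm{gen}}$ and let $e\in\mathfrak g_1$ be such that the orthogonal projection of $e$ onto each eigenspace of $S^2$ is nonzero. Let $N$ be the number of distinct eigenvalues of $S^2$. For all $T\in V$, if $TS^je=0$ for $j=0,\dots,2N-1$, then $T=0$.
   Context: $\mathfrak g=\mathfrak g_1\oplus\mathfrak g_2$ is the Lie algebra of a $2$-step stratified group ($[\mathfrak g_1,\mathfrak g_1]=\mathfrak g_2\ne\{0\}$, $[\mathfrak g,\mathfrak g_2]=0$), and $\langle\cdot,\cdot\rangle$ is an inner product on $\mathfrak g_1$. For $\mu\in\mathfrak g_2^*$, $J_\mu$ is the skew-symmetric endomorphism of $\mathfrak g_1$ with $\langle J_\mu x,x'\rangle=\mu([x,x'])$. $V=\{J_\mu:\mu\in\mathfrak g_2^*\}$, a linear subspace of the skew-symmetric endomorphisms of $\mathfrak g_1$, and $V_{\mathrm{gen}}$ is the set of elements of $V$ having the maximal number of distinct eigenvalues among elements of $V$. *)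

theory Defs
  imports "HOL-Analysis.Analysis"
begin

text \<open>The first layer g1 is a Euclidean space 'a (its inner product is the given one),
the second layer g2 is a Euclidean space 'b, and the Lie bracket restricted to g1 x g1
is a bilinear skew-symmetric map br. Since the group is 2-step, g2 is central and this
is all of the bracket.\<close>

definition two_step_bracket :: "('a::euclidean_space \<Rightarrow> 'a \<Rightarrow> 'b::euclidean_space) \<Rightarrow> bool" where
  "two_step_bracket br \<longleftrightarrow> bilinear br \<and> (\<forall>x y. br x y = - br y x)
     \<and> span (range (\<lambda>(x, y). br x y)) = UNIV"

text \<open>J_mu: the endomorphism of g1 with J_mu x \<bullet> x' = mu [x, x'].\<close>
definition Jmap :: "('a::euclidean_space \<Rightarrow> 'a \<Rightarrow> 'b) \<Rightarrow> ('b \<Rightarrow> real) \<Rightarrow> 'a \<Rightarrow> 'a" where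
  "Jmap br \<mu> x = (\<Sum>b\<in>Basis. \<mu> (br x b) *\<^sub>R b)"

definition Vspace :: "('a::euclidean_space \<Rightarrow> 'a \<Rightarrow> 'b::euclidean_space) \<Rightarrow> ('a \<Rightarrow> 'a) set" where
  "Vspace br = {Jmap br \<mu> | \<mu>. linear \<mu>}"

text \<open>Complex eigenvalues of a real linear endomorphism (eigenvalues of its complexification):
c is an eigenvalue iff f(z + i w) = c (z + i w) for some nonzero z + i w.\<close>
definition ceigenvalues :: "('a::real_vector \<Rightarrow> 'a) \<Rightarrow> complex set" where
  "ceigenvalues f = {c. \<exists>z w. (z \<noteq> 0 \<or> w \<noteq> 0) \<and>
      f z = Re c *\<^sub>R z - Im c *\<^sub>R w \<and> f w = Im c *\<^sub>R z + Re c *\<^sub>R w}"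

definition Vgen :: "('a::euclidean_space \<Rightarrow> 'a \<Rightarrow> 'b::euclidean_space) \<Rightarrow> ('a \<Rightarrow> 'a) set" where
  "Vgen br = {S \<in> Vspace br. \<forall>T \<in> Vspace br. card (ceigenvalues T) \<le> card (ceigenvalues S)}"

definition eigenvalues :: "('a::real_vector \<Rightarrow> 'a) \<Rightarrow> real set" where
  "eigenvalues f = {l. \<exists>x. x \<noteq> 0 \<and> f x = l *\<^sub>R x}"

definition eigenspace :: "('a::real_vector \<Rightarrow> 'a) \<Rightarrow> real \<Rightarrow> 'a set" where
  "eigenspace f l = {x. f x = l *\<^sub>R x}"

definition orth_proj :: "'a::euclidean_space set \<Rightarrow> 'a \<Rightarrow> 'a" where
  "orth_proj W e = (THE p. p \<in> W \<and> (\<forall>w\<in>W. (e - p) \<bullet> w = 0))"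

end

theory Submission
  imports Defs
begin

text \<open>T vanishes on the Krylov space K spanned by the S^j e, j < 2N, and K is S-invariant
  because the minimal polynomial of the symmetric map S \<circ> S has degree N. Hence every S + t T
  agrees with S on K. Since e is not orthogonal to any eigenspace of S \<circ> S, each such
  eigenspace contains a nonzero vector of K, so every complex eigenvalue of S is one of S + t T;
  genericity of S forces the spectra to coincide. The operator norm of a skew map is its spectral
  radius, so the norms of S + t T are bounded independently of t, which forces T = 0.\<close>

section \<open>Symmetric maps\<close>

lemma quadratic_nonpos_imp_linear_coeff_zero:
  fixes a b :: real
  assumes "\<And>s. 2 * s * a + s\<^sup>2 * b \<le> 0"
  shows "a = 0"
proof -
  define M where "M = \<bar>b\<bar> + 1"
  have M: "M > 0" "2 * M + b > 0" unfolding M_def by auto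
  have "2 * (a / M) * a + (a / M)\<^sup>2 * b = a\<^sup>2 * (2 * M + b) / M\<^sup>2"
    using M by (simp add: field_simps power2_eq_square)
  with assms[of "a / M"] have "a\<^sup>2 * (2 * M + b) \<le> 0"
    using M by (simp add: divide_le_0_iff)
  with M show ?thesis by (simp add: mult_le_0_iff)
qed

lemma Rayleigh_maximum_exists:
  fixes A :: "'a::euclidean_space \<Rightarrow> 'a"
  assumes "linear A" "subspace U" "x1 \<in> U" "x1 \<noteq> 0"
  shows "\<exists>x0\<in>U. norm x0 = 1 \<and> (\<forall>x\<in>U. A x \<bullet> x \<le> (A x0 \<bullet> x0) * (x \<bullet> x))"
proof -
  let ?C = "sphere 0 1 \<inter> U"
  have "compact ?C" by (intro compact_Int_closed compact_sphere closed_subspace assms)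
  moreover have "x1 /\<^sub>R norm x1 \<in> ?C" using assms by (auto simp: subspace_scale)
  moreover have "continuous_on ?C (\<lambda>x. A x \<bullet> x)"
    using assms(1) by (intro continuous_on_inner linear_continuous_on continuous_on_id)
      (simp add: linear_conv_bounded_linear)
  ultimately obtain x0 where x0: "x0 \<in> ?C" and max: "\<And>y. y \<in> ?C \<Longrightarrow> A y \<bullet> y \<le> A x0 \<bullet> x0"
    using continuous_attains_sup[of ?C] by blast
  have "A x \<bullet> x \<le> (A x0 \<bullet> x0) * (x \<bullet> x)" if "x \<in> U" for x
  proof (cases "x = 0")
    case True then show ?thesis by (simp add: linear_0[OF assms(1)])
  next
    case False
    then have "x /\<^sub>R norm x \<in> ?C" using that assms(2) by (simp add: subspace_scale)
    then have "A (x /\<^sub>R norm x) \<bullet> (x /\<^sub>R norm x) \<le> A x0 \<bullet> x0" by (rule max)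
    moreover have "A (x /\<^sub>R norm x) \<bullet> (x /\<^sub>R norm x) = (A x \<bullet> x) / (norm x)\<^sup>2"
      using False by (simp add: linear_scale[OF assms(1)] power2_eq_square field_simps)
    ultimately have "(A x \<bullet> x) / (norm x)\<^sup>2 \<le> A x0 \<bullet> x0" by simp
    then show ?thesis using False by (simp add: divide_le_eq mult.commute power2_norm_eq_inner)
  qed
  then show ?thesis using x0 by auto
qed

text \<open>For y \<in> U, s \<mapsto> A (x0 + s y) \<bullet> (x0 + s y) - l |x0 + s y|^2 is maximal at s = 0,
  so its linear term (A x0 - l x0) \<bullet> y vanishes.\<close>
lemma Rayleigh_maximizer_eigenvector:
  fixes A :: "'a::euclidean_space \<Rightarrow> 'a"
  assumes lin: "linear A" and sym: "\<And>x y. A x \<bullet> y = x \<bullet> A y"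
    and U: "subspace U" and inv: "\<And>x. x \<in> U \<Longrightarrow> A x \<in> U"
    and x0: "x0 \<in> U" "norm x0 = 1" and max: "\<forall>x\<in>U. A x \<bullet> x \<le> l * (x \<bullet> x)"
    and l: "l = A x0 \<bullet> x0"
  shows "A x0 = l *\<^sub>R x0"
proof -
  have x00: "x0 \<bullet> x0 = 1" using x0 norm_eq_1 by blast
  have orth: "(A x0 - l *\<^sub>R x0) \<bullet> y = 0" if "y \<in> U" for y
  proof (rule quadratic_nonpos_imp_linear_coeff_zero)
    fix s :: real
    have "x0 + s *\<^sub>R y \<in> U" using U x0 that by (simp add: subspace_add subspace_scale)
    then have "A (x0 + s *\<^sub>R y) \<bullet> (x0 + s *\<^sub>R y) \<le> l * ((x0 + s *\<^sub>R y) \<bullet> (x0 + s *\<^sub>R y))"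
      using max by blast
    moreover have "A y \<bullet> x0 = A x0 \<bullet> y" using sym[of y x0] by (simp add: inner_commute)
    ultimately show "2 * s * ((A x0 - l *\<^sub>R x0) \<bullet> y) + s\<^sup>2 * (A y \<bullet> y - l * (y \<bullet> y)) \<le> 0"
      using x00 by (simp add: linear_add[OF lin] linear_scale[OF lin] inner_add_left
          inner_add_right inner_diff_left inner_commute l power2_eq_square algebra_simps)
  qed
  have "A x0 - l *\<^sub>R x0 \<in> U" using U inv x0 by (simp add: subspace_diff subspace_scale)
  then have "(A x0 - l *\<^sub>R x0) \<bullet> (A x0 - l *\<^sub>R x0) = 0" by (rule orth)
  then show ?thesis by simp
qed

lemma symmetric_max_eigenvector:
  fixes A :: "'a::euclidean_space \<Rightarrow> 'a"
  assumes "linear A" "\<And>x y. A x \<bullet> y = x \<bullet> A y"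
    and "subspace U" "\<And>x. x \<in> U \<Longrightarrow> A x \<in> U" "x1 \<in> U" "x1 \<noteq> 0"
  shows "\<exists>x0 l. x0 \<in> U \<and> norm x0 = 1 \<and> A x0 = l *\<^sub>R x0 \<and> (\<forall>x\<in>U. A x \<bullet> x \<le> l * (x \<bullet> x))"
  using Rayleigh_maximum_exists[OF assms(1,3,5,6)] Rayleigh_maximizer_eigenvector[OF assms(1-4)]
  by blast

lemma symmetric_eigenvalues_nonempty:
  fixes A :: "'a::euclidean_space \<Rightarrow> 'a"
  assumes "linear A" "\<And>x y. A x \<bullet> y = x \<bullet> A y"
  shows "eigenvalues A \<noteq> {}"
proof -
  obtain b0 :: 'a where "b0 \<in> Basis" using nonempty_Basis by blast
  then have "b0 \<noteq> 0" by (rule nonzero_Basis)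
  then obtain x0 l where "norm x0 = 1" "A x0 = l *\<^sub>R x0"
    using symmetric_max_eigenvector[OF assms subspace_UNIV] by blast
  then show ?thesis unfolding eigenvalues_def by (auto intro!: exI[of _ x0])
qed

lemma finite_eigenvalues_symmetric:
  fixes A :: "'a::euclidean_space \<Rightarrow> 'a"
  assumes sym: "\<And>x y. A x \<bullet> y = x \<bullet> A y"
  shows "finite (eigenvalues A)"
proof -
  define v where "v l = (SOME x. x \<noteq> 0 \<and> A x = l *\<^sub>R x)" for l
  have v: "v l \<noteq> 0 \<and> A (v l) = l *\<^sub>R v l" if "l \<in> eigenvalues A" for l
    using that unfolding eigenvalues_def v_def by (metis (mono_tags, lifting) mem_Collect_eq someI_ex)
  have inj: "inj_on v (eigenvalues A)"
    by (rule inj_onI) (metis v scaleR_cancel_right)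
  have "pairwise orthogonal (v ` eigenvalues A)"
    unfolding pairwise_def orthogonal_def
  proof clarify
    fix l m assume lm: "l \<in> eigenvalues A" "m \<in> eigenvalues A" "v l \<noteq> v m"
    have "l * (v l \<bullet> v m) = A (v l) \<bullet> v m" using v[OF lm(1)] by simp
    also have "\<dots> = v l \<bullet> A (v m)" by (rule sym)
    also have "\<dots> = m * (v l \<bullet> v m)" using v[OF lm(2)] by simp
    finally show "v l \<bullet> v m = 0" using lm by auto
  qed
  moreover have "0 \<notin> v ` eigenvalues A" using v by auto
  ultimately have "finite (v ` eigenvalues A)"
    using pairwise_orthogonal_independent finiteI_independent by blast
  then show ?thesis using finite_imageD inj by blast
qed

lemma eigenvector_component_in_invariant_subspace:
  fixes A :: "'a::euclidean_space \<Rightarrow> 'a"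
  assumes lin: "linear A" and sym: "\<And>x y. A x \<bullet> y = x \<bullet> A y"
    and K: "subspace K" and AK: "\<And>x. x \<in> K \<Longrightarrow> A x \<in> K"
    and eig: "A (y + z) = l *\<^sub>R (y + z)" and y: "y \<in> K" and z: "\<And>w. w \<in> K \<Longrightarrow> z \<bullet> w = 0"
  shows "A y = l *\<^sub>R y"
proof -
  have eq: "A y - l *\<^sub>R y = l *\<^sub>R z - A z"
    using eig by (simp add: linear_add[OF lin] scaleR_add_right algebra_simps)
  have "A y - l *\<^sub>R y \<in> K" using AK[OF y] y K by (simp add: subspace_diff subspace_scale)
  moreover have "(l *\<^sub>R z - A z) \<bullet> w = 0" if "w \<in> K" for w
    using z[OF that] z[OF AK[OF that]] sym[of z w] by (simp add: inner_diff_left)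
  ultimately have "(A y - l *\<^sub>R y) \<bullet> (A y - l *\<^sub>R y) = 0" unfolding eq by blast
  then show ?thesis by simp
qed

section \<open>Krylov spaces\<close>

definition Krylov :: "('a::real_vector \<Rightarrow> 'a) \<Rightarrow> 'a \<Rightarrow> nat \<Rightarrow> 'a set" where
  "Krylov A x n = span {(A ^^ k) x | k. k < n}"

lemma subspace_Krylov: "subspace (Krylov A x n)"
  unfolding Krylov_def by simp

lemma power_in_Krylov: "k < n \<Longrightarrow> (A ^^ k) x \<in> Krylov A x n"
  unfolding Krylov_def by (rule span_base) blast

lemma Krylov_mono: "m \<le> n \<Longrightarrow> Krylov A x m \<subseteq> Krylov A x n"
  unfolding Krylov_def by (rule span_mono) auto

lemma image_Krylov_subset:
  assumes "linear A"
  shows "A ` Krylov A x n \<subseteq> Krylov A x (Suc n)"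
proof -
  have "A ` {(A ^^ k) x | k. k < n} \<subseteq> Krylov A x (Suc n)"
    using power_in_Krylov[of "Suc _" "Suc n" A x] by auto
  then show ?thesis
    unfolding Krylov_def span_linear_image[OF assms, symmetric] by (rule span_minimal) simp
qed

lemma Krylov_Suc_subset:
  assumes "(A ^^ n) x \<in> Krylov A x n"
  shows "Krylov A x (Suc n) \<subseteq> Krylov A x n"
proof -
  have "{(A ^^ k) x | k. k < Suc n} \<subseteq> Krylov A x n"
    using assms power_in_Krylov[of _ n A x] less_antisym by blast
  then show ?thesis unfolding Krylov_def by (rule span_minimal) simp
qed

lemma Krylov_invariant:
  assumes "linear A" "(A ^^ n) x \<in> Krylov A x n" "y \<in> Krylov A x n"
  shows "A y \<in> Krylov A x n"
  using image_Krylov_subset[OF assms(1)] Krylov_Suc_subset[OF assms(2)] assms(3) by blast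

lemma funpow_comp_self: "(f \<circ> f) ^^ k = f ^^ (2 * k)"
proof -
  have "f \<circ> f = f ^^ 2" by (simp add: numeral_2_eq_2)
  then show ?thesis by (simp only: funpow_mult)
qed

lemma Krylov_square_subset: "Krylov (S \<circ> S) x n \<subseteq> Krylov S x (2 * n)"
  unfolding Krylov_def funpow_comp_self by (intro span_mono) auto

fun shift_prod :: "('a::real_vector \<Rightarrow> 'a) \<Rightarrow> real list \<Rightarrow> 'a \<Rightarrow> 'a" where
  "shift_prod A [] x = x"
| "shift_prod A (m # ms) x = A (shift_prod A ms x) - m *\<^sub>R shift_prod A ms x"

lemma linear_shift_prod: "linear A \<Longrightarrow> linear (shift_prod A ms)"
proof (rule linearI)
  show "linear A \<Longrightarrow> shift_prod A ms (x + y) = shift_prod A ms x + shift_prod A ms y" for x y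
    by (induction ms) (simp_all add: linear_add algebra_simps)
  show "linear A \<Longrightarrow> shift_prod A ms (c *\<^sub>R x) = c *\<^sub>R shift_prod A ms x" for c x
    by (induction ms) (simp_all add: linear_scale algebra_simps)
qed

lemma shift_prod_commute: "linear A \<Longrightarrow> A (shift_prod A ms x) = shift_prod A ms (A x)"
  by (induction ms) (simp_all add: linear_diff linear_scale)

lemma shift_prod_symmetric:
  assumes "linear A" "\<And>x y. A x \<bullet> y = x \<bullet> A y"
  shows "shift_prod A ms x \<bullet> y = x \<bullet> shift_prod A ms y"
proof (induction ms arbitrary: x y)
  case Nil then show ?case by simp
next
  case (Cons m ms)
  have "A (shift_prod A ms x) \<bullet> y = shift_prod A ms x \<bullet> A y" by (rule assms(2))
  also have "\<dots> = x \<bullet> shift_prod A ms (A y)" by (rule Cons)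
  also have "\<dots> = x \<bullet> A (shift_prod A ms y)" by (simp add: shift_prod_commute assms(1))
  finally show ?case using Cons[of x y] by (simp add: inner_diff_left inner_diff_right)
qed

lemma shift_prod_eigenvector:
  "linear A \<Longrightarrow> A v = l *\<^sub>R v \<Longrightarrow> shift_prod A ms v = (\<Prod>m\<leftarrow>ms. l - m) *\<^sub>R v"
  by (induction ms) (simp_all add: linear_scale algebra_simps)

lemma power_minus_shift_prod_in_Krylov:
  assumes lin: "linear A"
  shows "(A ^^ length ms) x - shift_prod A ms x \<in> Krylov A x (length ms)"
proof (induction ms)
  case Nil then show ?case by (simp add: Krylov_def span_0)
next
  case (Cons m ms)
  let ?n = "length ms"
  have image: "A ((A ^^ ?n) x - shift_prod A ms x) \<in> Krylov A x (Suc ?n)"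
    using image_Krylov_subset[OF lin] Cons by blast
  have previous: "shift_prod A ms x \<in> Krylov A x (Suc ?n)"
    using subspace_diff[OF subspace_Krylov power_in_Krylov[of ?n "Suc ?n"]
        subsetD[OF Krylov_mono Cons]] by simp
  have "(A ^^ length (m # ms)) x - shift_prod A (m # ms) x
      = A ((A ^^ ?n) x - shift_prod A ms x) + m *\<^sub>R shift_prod A ms x"
    by (simp add: linear_diff[OF lin])
  then show ?case
    unfolding length_Cons by (metis subspace_add subspace_scale subspace_Krylov image previous)
qed

text \<open>The range of this product p is A-invariant, so if nonzero it contains an eigenvector
  x0 = p z; but p x0 = 0 and p is symmetric, so |x0|^2 = z \<bullet> p x0 = 0.\<close>
lemma shift_prod_eigenvalues_eq_0:
  fixes A :: "'a::euclidean_space \<Rightarrow> 'a"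
  assumes lin: "linear A" and sym: "\<And>x y. A x \<bullet> y = x \<bullet> A y"
    and ms: "set ms = eigenvalues A"
  shows "shift_prod A ms x = 0"
proof (rule ccontr)
  assume ne: "shift_prod A ms x \<noteq> 0"
  have U: "subspace (range (shift_prod A ms))"
    by (intro linear_subspace_image linear_shift_prod lin subspace_UNIV)
  have inv: "A z \<in> range (shift_prod A ms)" if "z \<in> range (shift_prod A ms)" for z
    using that shift_prod_commute[OF lin] by auto
  obtain x0 l where x0: "x0 \<in> range (shift_prod A ms)" "norm x0 = 1" "A x0 = l *\<^sub>R x0"
    using symmetric_max_eigenvector[OF lin sym U inv rangeI ne] by blast
  then have "l \<in> set ms" using ms unfolding eigenvalues_def by (auto intro!: exI[of _ x0])
  then have "shift_prod A ms x0 = 0"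
    using shift_prod_eigenvector[OF lin x0(3)] by (simp add: prod_list_zero_iff)
  moreover obtain z where "x0 = shift_prod A ms z" using x0 by auto
  ultimately have "x0 \<bullet> x0 = 0" using shift_prod_symmetric[OF lin sym, where x=z and y=x0] by simp
  then show False using x0 by simp
qed

lemma symmetric_power_card_eigenvalues_in_Krylov:
  fixes A :: "'a::euclidean_space \<Rightarrow> 'a"
  assumes "linear A" "\<And>x y. A x \<bullet> y = x \<bullet> A y"
  shows "(A ^^ card (eigenvalues A)) x \<in> Krylov A x (card (eigenvalues A))"
proof -
  define ms where "ms = sorted_list_of_set (eigenvalues A)"
  have "set ms = eigenvalues A" "length ms = card (eigenvalues A)"
    using finite_eigenvalues_symmetric[OF assms(2)] unfolding ms_def by auto
  then show ?thesis
    using power_minus_shift_prod_in_Krylov[OF assms(1), of ms x]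
      shift_prod_eigenvalues_eq_0[OF assms] by simp
qed

section \<open>Skew-symmetric maps\<close>

definition skew_symmetric :: "('a::euclidean_space \<Rightarrow> 'a) \<Rightarrow> bool" where
  "skew_symmetric f \<longleftrightarrow> linear f \<and> (\<forall>x y. f x \<bullet> y = - (x \<bullet> f y))"

lemma skew_symmetric_linear: "skew_symmetric S \<Longrightarrow> linear S"
  unfolding skew_symmetric_def by blast

lemma skew_symmetric_inner_self: "skew_symmetric S \<Longrightarrow> S x \<bullet> x = 0"
  unfolding skew_symmetric_def by (metis inner_commute add.inverse_unique diff_0 neg_equal_zero add.commute)

lemma skew_symmetric_square_symmetric: "skew_symmetric S \<Longrightarrow> S (S x) \<bullet> y = x \<bullet> S (S y)"
  unfolding skew_symmetric_def by simp

lemma skew_symmetric_square_inner: "skew_symmetric S \<Longrightarrow> S (S x) \<bullet> x = - (S x \<bullet> S x)"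
  unfolding skew_symmetric_def by simp

lemma skew_symmetric_Krylov_invariant:
  assumes sk: "skew_symmetric S"
    and y: "y \<in> Krylov S x (2 * card (eigenvalues (S \<circ> S)))"
  shows "S y \<in> Krylov S x (2 * card (eigenvalues (S \<circ> S)))"
proof -
  let ?N = "card (eigenvalues (S \<circ> S))"
  have lin: "linear S" using sk by (rule skew_symmetric_linear)
  have "linear (S \<circ> S)" using lin lin by (rule linear_compose)
  moreover have "(S \<circ> S) x \<bullet> y = x \<bullet> (S \<circ> S) y" for x y
    using skew_symmetric_square_symmetric[OF sk] by simp
  ultimately have "((S \<circ> S) ^^ ?N) x \<in> Krylov S x (2 * ?N)"
    using symmetric_power_card_eigenvalues_in_Krylov Krylov_square_subset by blast
  then have "(S ^^ (2 * ?N)) x \<in> Krylov S x (2 * ?N)" by (simp only: funpow_comp_self)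
  then show ?thesis using Krylov_invariant[OF lin _ y] by blast
qed

lemma skew_symmetric_in_Krylov:
  assumes sk: "skew_symmetric S"
  shows "x \<in> Krylov S x (2 * card (eigenvalues (S \<circ> S)))"
proof -
  have "linear (S \<circ> S)" using skew_symmetric_linear[OF sk] by (intro linear_compose)
  moreover have sym: "(S \<circ> S) x \<bullet> y = x \<bullet> (S \<circ> S) y" for x y
    using skew_symmetric_square_symmetric[OF sk] by simp
  ultimately have "eigenvalues (S \<circ> S) \<noteq> {}" by (rule symmetric_eigenvalues_nonempty)
  moreover have "finite (eigenvalues (S \<circ> S))" by (rule finite_eigenvalues_symmetric) (rule sym)
  ultimately have "0 < card (eigenvalues (S \<circ> S))" by (simp add: card_gt_0_iff)
  then show ?thesis using power_in_Krylov[of 0 "2 * card (eigenvalues (S \<circ> S))" S x] by simp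
qed

lemma ceigenvalues_skew_symmetric:
  assumes sk: "skew_symmetric S" and c: "c \<in> ceigenvalues S"
  shows "Re c = 0" and "- (Im c)\<^sup>2 \<in> eigenvalues (S \<circ> S)"
proof -
  obtain z w where nz: "z \<noteq> 0 \<or> w \<noteq> 0" and
    z: "S z = Re c *\<^sub>R z - Im c *\<^sub>R w" and w: "S w = Im c *\<^sub>R z + Re c *\<^sub>R w"
    using c unfolding ceigenvalues_def by blast
  have lin: "linear S" using sk by (rule skew_symmetric_linear)
  have "S z \<bullet> z = 0" "S w \<bullet> w = 0" using skew_symmetric_inner_self[OF sk] by auto
  then have "Re c * (z \<bullet> z + w \<bullet> w) = 0"
    unfolding z w by (simp add: inner_diff_left inner_add_left inner_commute algebra_simps)
  moreover have "z \<bullet> z + w \<bullet> w > 0" using nz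
    by (metis add_nonneg_pos add_pos_nonneg inner_gt_zero_iff inner_ge_zero)
  ultimately show re: "Re c = 0" by simp
  have "S (S z) = - (Im c)\<^sup>2 *\<^sub>R z" "S (S w) = - (Im c)\<^sup>2 *\<^sub>R w"
    using z w re by (simp_all add: linear_scale[OF lin] linear_diff[OF lin] linear_add[OF lin]
        linear_neg[OF lin] power2_eq_square)
  then show "- (Im c)\<^sup>2 \<in> eigenvalues (S \<circ> S)" using nz unfolding eigenvalues_def by auto
qed

text \<open>S acts on the plane spanned by y and S y as a rotation with eigenvalue i b.\<close>
lemma ceigenvalue_from_square_eigenvector:
  assumes sk: "skew_symmetric S" and lf: "linear f" and y: "y \<noteq> 0"
    and Sy: "S (S y) = - b\<^sup>2 *\<^sub>R y" and f1: "f y = S y" and f2: "f (S y) = S (S y)"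
  shows "Complex 0 b \<in> ceigenvalues f"
proof (cases "b = 0")
  case True
  then have "S y \<bullet> S y = 0" using skew_symmetric_square_inner[OF sk, of y] Sy by simp
  then show ?thesis using y f1 True
    unfolding ceigenvalues_def
    by (intro CollectI exI[of _ y] exI[of _ 0]) (simp add: linear_0[OF lf])
next
  case False
  then show ?thesis unfolding ceigenvalues_def
    using y f1 f2 Sy by (intro CollectI exI[of _ y] exI[of _ "- (1 / b) *\<^sub>R S y"])
      (simp add: linear_scale[OF lf] linear_neg[OF lf] power2_eq_square)
qed

lemma finite_ceigenvalues_skew_symmetric:
  assumes sk: "skew_symmetric S"
  shows "finite (ceigenvalues S)"
proof -
  let ?G = "eigenvalues (S \<circ> S)"
  have "finite ?G"
    using skew_symmetric_square_symmetric[OF sk] by (intro finite_eigenvalues_symmetric) simp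
  moreover have "ceigenvalues S \<subseteq> (\<lambda>l. Complex 0 (sqrt (- l))) ` ?G \<union> (\<lambda>l. Complex 0 (- sqrt (- l))) ` ?G"
  proof
    fix c assume c: "c \<in> ceigenvalues S"
    have "sqrt (- (- (Im c)\<^sup>2)) = \<bar>Im c\<bar>" by simp
    then have "c = Complex 0 (sqrt (- (- (Im c)\<^sup>2))) \<or> c = Complex 0 (- sqrt (- (- (Im c)\<^sup>2)))"
      using ceigenvalues_skew_symmetric(1)[OF sk c] by (cases "Im c \<ge> 0") (auto intro: complex_eqI)
    then show "c \<in> (\<lambda>l. Complex 0 (sqrt (- l))) ` ?G \<union> (\<lambda>l. Complex 0 (- sqrt (- l))) ` ?G"
      using ceigenvalues_skew_symmetric(2)[OF sk c] by blast
  qed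
  ultimately show ?thesis by (simp add: finite_subset)
qed

text \<open>|f x|^2 is the Rayleigh quotient of - f \<circ> f; its maximum is an eigenvalue b^2 of
  - f \<circ> f, and i b is an eigenvalue of f.\<close>
lemma skew_symmetric_norm_le_ceigenvalue:
  fixes f :: "'a::euclidean_space \<Rightarrow> 'a"
  assumes sk: "skew_symmetric f"
  shows "\<exists>c\<in>ceigenvalues f. \<forall>x. norm (f x) \<le> cmod c * norm x"
proof -
  let ?B = "\<lambda>x. - f (f x)"
  have lin: "linear f" using sk by (rule skew_symmetric_linear)
  have "linear (f \<circ> f)" using lin lin by (rule linear_compose)
  then have linB: "linear ?B" using linear_compose_neg[of "f \<circ> f"] by (simp add: o_def)
  have symB: "?B x \<bullet> y = x \<bullet> ?B y" for x y
    using skew_symmetric_square_symmetric[OF sk, of x y] by simp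
  obtain b0 :: 'a where "b0 \<in> Basis" using nonempty_Basis by blast
  then have "b0 \<noteq> 0" by (rule nonzero_Basis)
  then have "\<exists>x0 l. x0 \<in> UNIV \<and> norm x0 = 1 \<and> ?B x0 = l *\<^sub>R x0 \<and> (\<forall>x\<in>UNIV. ?B x \<bullet> x \<le> l * (x \<bullet> x))"
    by (intro symmetric_max_eigenvector[OF linB symB subspace_UNIV]) simp_all
  then obtain x0 lam where x0: "norm x0 = 1" "?B x0 = lam *\<^sub>R x0"
    and max: "\<And>x. ?B x \<bullet> x \<le> lam * (x \<bullet> x)"
    by blast
  have Bx: "?B x \<bullet> x = (norm (f x))\<^sup>2" for x
    using skew_symmetric_square_inner[OF sk, of x] by (simp add: power2_norm_eq_inner)
  have "?B x0 \<bullet> x0 = lam * (x0 \<bullet> x0)" by (simp only: x0(2) inner_scaleR_left)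
  then have lam0: "lam \<ge> 0" using Bx[of x0] x0(1) by (simp add: norm_eq_1)
  define b where "b = sqrt lam"
  have b: "b \<ge> 0" "b\<^sup>2 = lam" unfolding b_def using lam0 by simp_all
  have "f (f x0) = - b\<^sup>2 *\<^sub>R x0" using x0(2) b(2) by (simp add: minus_equation_iff)
  moreover have "x0 \<noteq> 0" using x0(1) by auto
  ultimately have "Complex 0 b \<in> ceigenvalues f"
    by (intro ceigenvalue_from_square_eigenvector[OF sk lin]) simp_all
  moreover have "norm (f x) \<le> cmod (Complex 0 b) * norm x" for x
  proof -
    have "(norm (f x))\<^sup>2 \<le> lam * (x \<bullet> x)" using max[of x] Bx[of x] by simp
    also have "\<dots> = (b * norm x)\<^sup>2" using b(2) by (simp add: power_mult_distrib power2_norm_eq_inner)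
    finally have "norm (f x) \<le> b * norm x" by (rule power2_le_imp_le) (simp add: b(1))
    then show ?thesis using b(1) by (simp add: cmod_def)
  qed
  ultimately show ?thesis by blast
qed

lemma skew_symmetric_norm_le_sum_ceigenvalues:
  assumes sk: "skew_symmetric f"
  shows "norm (f x) \<le> (\<Sum>c\<in>ceigenvalues f. cmod c) * norm x"
proof -
  obtain c where c: "c \<in> ceigenvalues f" and "norm (f x) \<le> cmod c * norm x"
    using skew_symmetric_norm_le_ceigenvalue[OF sk] by blast
  moreover have "cmod c \<le> (\<Sum>c\<in>ceigenvalues f. cmod c)"
    using c finite_ceigenvalues_skew_symmetric[OF sk] by (intro member_le_sum) auto
  ultimately show ?thesis by (meson mult_right_mono norm_ge_zero order_trans)
qed

lemma bounded_on_line_imp_direction_zero: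
  fixes u v :: "'a::real_normed_vector"
  assumes "\<And>t. norm (u + t *\<^sub>R v) \<le> C"
  shows "v = 0"
proof (rule ccontr)
  assume "v \<noteq> 0"
  define t where "t = (norm u + \<bar>C\<bar> + 1) / norm v"
  have "norm (t *\<^sub>R v) = norm u + \<bar>C\<bar> + 1"
    using \<open>v \<noteq> 0\<close> unfolding t_def by simp
  moreover have "norm (t *\<^sub>R v) \<le> norm (u + t *\<^sub>R v) + norm u"
    using norm_triangle_ineq4[of "u + t *\<^sub>R v" u] by simp
  ultimately show False using assms[of t] by linarith
qed

lemma orth_proj_eq_0:
  assumes "0 \<in> W" "\<forall>w\<in>W. e \<bullet> w = 0"
  shows "orth_proj W e = 0"
  unfolding orth_proj_def
proof (rule the_equality)
  show "0 \<in> W \<and> (\<forall>w\<in>W. (e - 0) \<bullet> w = 0)" using assms by simp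
next
  fix p assume "p \<in> W \<and> (\<forall>w\<in>W. (e - p) \<bullet> w = 0)"
  then have "(e - p) \<bullet> p = 0" "e \<bullet> p = 0" using assms by auto
  then have "p \<bullet> p = 0" by (simp add: inner_diff_left)
  then show "p = 0" by simp
qed

text \<open>Every eigenspace of S \<circ> S meets K in a nonzero vector, because e \<in> K is not orthogonal
  to it; this vector and its image under S span a plane on which f and S coincide.\<close>
lemma ceigenvalues_subset_if_agree_on_invariant:
  fixes S f :: "'a::euclidean_space \<Rightarrow> 'a"
  assumes sk: "skew_symmetric S" and lf: "linear f"
    and K: "subspace K" and SK: "\<And>x. x \<in> K \<Longrightarrow> S x \<in> K" and fK: "\<And>x. x \<in> K \<Longrightarrow> f x = S x"
    and eK: "e \<in> K"
    and proj: "\<forall>l\<in>eigenvalues (S \<circ> S). orth_proj (eigenspace (S \<circ> S) l) e \<noteq> 0"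
  shows "ceigenvalues S \<subseteq> ceigenvalues f"
proof
  fix c assume c: "c \<in> ceigenvalues S"
  let ?l = "- (Im c)\<^sup>2"
  have lin: "linear S" using sk by (rule skew_symmetric_linear)
  have "orth_proj (eigenspace (S \<circ> S) ?l) e \<noteq> 0"
    using proj ceigenvalues_skew_symmetric(2)[OF sk c] by blast
  moreover have "0 \<in> eigenspace (S \<circ> S) ?l" unfolding eigenspace_def by (simp add: linear_0[OF lin])
  ultimately obtain v where v: "S (S v) = ?l *\<^sub>R v" "e \<bullet> v \<noteq> 0"
    using orth_proj_eq_0[of "eigenspace (S \<circ> S) ?l" e] unfolding eigenspace_def by auto
  obtain y z where y: "y \<in> K" and z: "\<And>w. w \<in> K \<Longrightarrow> z \<bullet> w = 0" and vyz: "v = y + z"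
    using orthogonal_subspace_decomp_exists[of K v] K
    by (metis orthogonal_def span_eq_iff)
  have "S (S y) = ?l *\<^sub>R y"
  proof (rule eigenvector_component_in_invariant_subspace[where A = "S \<circ> S", simplified])
    show "linear (S \<circ> S)" using lin lin by (rule linear_compose)
  qed (use skew_symmetric_square_symmetric[OF sk] K SK v(1) vyz y z in auto)
  moreover have "y \<noteq> 0" using v(2) z[OF eK] vyz by (auto simp: inner_add_right inner_commute)
  ultimately have "Complex 0 (Im c) \<in> ceigenvalues f"
    using fK y SK by (intro ceigenvalue_from_square_eigenvector[OF sk lf]) auto
  moreover have "Complex 0 (Im c) = c"
    using ceigenvalues_skew_symmetric(1)[OF sk c] by (simp add: complex_eq_iff)
  ultimately show "c \<in> ceigenvalues f" by simp
qed

section \<open>The space V\<close>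

lemma Jmap_inner:
  assumes bl: "bilinear br" and mu: "linear \<mu>"
  shows "Jmap br \<mu> x \<bullet> y = \<mu> (br x y)"
proof -
  have lx: "linear (\<lambda>y. \<mu> (br x y))"
    using bl mu unfolding bilinear_def using linear_compose[of "br x" \<mu>] by (auto simp: o_def)
  have "\<mu> (br x y) = \<mu> (br x (\<Sum>b\<in>Basis. (y \<bullet> b) *\<^sub>R b))" by (simp add: euclidean_representation)
  also have "\<dots> = (\<Sum>b\<in>Basis. (y \<bullet> b) * \<mu> (br x b))"
    using linear_sum[OF lx, of "\<lambda>b. (y \<bullet> b) *\<^sub>R b" Basis] linear_scale[OF lx] by simp
  also have "\<dots> = Jmap br \<mu> x \<bullet> y"
    unfolding Jmap_def inner_sum_left by (rule sum.cong) (simp_all add: inner_commute[of y])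
  finally show ?thesis by simp
qed

lemma linear_Jmap:
  assumes bl: "bilinear br" and mu: "linear \<mu>"
  shows "linear (Jmap br \<mu>)"
proof -
  have lx: "linear (\<lambda>x. \<mu> (br x b))" for b
    using bl mu unfolding bilinear_def using linear_compose[of "\<lambda>x. br x b" \<mu>] by (auto simp: o_def)
  show ?thesis
  proof (rule linearI)
    fix x z show "Jmap br \<mu> (x + z) = Jmap br \<mu> x + Jmap br \<mu> z"
      unfolding Jmap_def linear_add[OF lx] by (simp only: scaleR_add_left sum.distrib)
  next
    fix c x show "Jmap br \<mu> (c *\<^sub>R x) = c *\<^sub>R Jmap br \<mu> x"
      unfolding Jmap_def linear_scale[OF lx] by (simp add: scaleR_sum_right)
  qed
qed

lemma Vspace_skew_symmetric:
  assumes tb: "two_step_bracket br" and f: "f \<in> Vspace br"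
  shows "skew_symmetric f"
proof -
  obtain \<mu> where mu: "linear \<mu>" and fe: "f = Jmap br \<mu>" using f unfolding Vspace_def by blast
  have bl: "bilinear br" and sk: "\<And>x y. br x y = - br y x"
    using tb unfolding two_step_bracket_def by blast+
  have "f x \<bullet> y = - (x \<bullet> f y)" for x y
    using Jmap_inner[OF bl mu, of x y] Jmap_inner[OF bl mu, of y x] sk[of x y] linear_neg[OF mu]
    by (simp add: fe inner_commute)
  then show ?thesis unfolding skew_symmetric_def using linear_Jmap[OF bl mu] fe by simp
qed

lemma Vspace_add_scaleR:
  assumes f: "f \<in> Vspace br" and g: "g \<in> Vspace br"
  shows "(\<lambda>x. f x + t *\<^sub>R g x) \<in> Vspace br"
proof -
  obtain \<mu> where mu: "linear \<mu>" and fe: "f = Jmap br \<mu>" using f unfolding Vspace_def by blast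
  obtain \<nu> where nu: "linear \<nu>" and ge: "g = Jmap br \<nu>" using g unfolding Vspace_def by blast
  have "linear (\<lambda>y. \<mu> y + t * \<nu> y)"
    by (rule linearI) (simp_all add: linear_add[OF mu] linear_add[OF nu] linear_scale[OF mu]
        linear_scale[OF nu] algebra_simps)
  moreover have "(\<lambda>x. f x + t *\<^sub>R g x) = Jmap br (\<lambda>y. \<mu> y + t * \<nu> y)"
    unfolding fe ge Jmap_def
    by (rule ext) (simp only: scaleR_add_left sum.distrib scaleR_sum_right scaleR_scaleR)
  ultimately show ?thesis unfolding Vspace_def by blast
qed

lemma Vgen_ceigenvalues_eq:
  assumes tb: "two_step_bracket br" and S: "S \<in> Vgen br" and f: "f \<in> Vspace br"
    and sub: "ceigenvalues S \<subseteq> ceigenvalues f"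
  shows "ceigenvalues f = ceigenvalues S"
proof -
  have "finite (ceigenvalues f)"
    using Vspace_skew_symmetric[OF tb f] by (rule finite_ceigenvalues_skew_symmetric)
  moreover have "card (ceigenvalues f) \<le> card (ceigenvalues S)" using S f unfolding Vgen_def by blast
  ultimately show ?thesis using sub card_seteq by blast
qed

theorem lemma3p1:
  fixes br :: "'a::euclidean_space \<Rightarrow> 'a \<Rightarrow> 'b::euclidean_space"
    and S :: "'a \<Rightarrow> 'a" and e :: 'a
  assumes "two_step_bracket br"
    and "S \<in> Vgen br"
    and "\<forall>l\<in>eigenvalues (S \<circ> S). orth_proj (eigenspace (S \<circ> S) l) e \<noteq> 0"
  shows "\<forall>T\<in>Vspace br.
           (\<forall>j < 2 * card (eigenvalues (S \<circ> S)). T ((S ^^ j) e) = 0) \<longrightarrow> T = (\<lambda>x. 0)"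
proof (intro ballI impI ext)
  fix T x assume T: "T \<in> Vspace br" and Tz: "\<forall>j < 2 * card (eigenvalues (S \<circ> S)). T ((S ^^ j) e) = 0"
  define K where "K = Krylov S e (2 * card (eigenvalues (S \<circ> S)))"
  have SV: "S \<in> Vspace br" using assms(2) unfolding Vgen_def by blast
  have sk: "skew_symmetric S" by (rule Vspace_skew_symmetric[OF assms(1) SV])
  have skt: "skew_symmetric (\<lambda>x. S x + t *\<^sub>R T x)" for t
    by (rule Vspace_skew_symmetric[OF assms(1) Vspace_add_scaleR[OF SV T]])
  have linT: "linear T" using Vspace_skew_symmetric[OF assms(1) T] by (rule skew_symmetric_linear)
  have TK: "T y = 0" if "y \<in> K" for y
    using linear_eq_0_on_span[OF linT _ that[unfolded K_def Krylov_def]] Tz by blast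
  have "ceigenvalues S \<subseteq> ceigenvalues (\<lambda>x. S x + t *\<^sub>R T x)" for t
    using skt[of t] TK skew_symmetric_Krylov_invariant[OF sk] skew_symmetric_in_Krylov[OF sk] assms(3)
    by (intro ceigenvalues_subset_if_agree_on_invariant[OF sk, where K = K])
      (auto simp: K_def subspace_Krylov skew_symmetric_linear)
  then have "ceigenvalues (\<lambda>x. S x + t *\<^sub>R T x) = ceigenvalues S" for t
    by (rule Vgen_ceigenvalues_eq[OF assms(1,2) Vspace_add_scaleR[OF SV T]])
  then have "norm (S x + t *\<^sub>R T x) \<le> (\<Sum>c\<in>ceigenvalues S. cmod c) * norm x" for t
    using skew_symmetric_norm_le_sum_ceigenvalues[OF skt[of t], of x] by simp
  then show "T x = 0" by (rule bounded_on_line_imp_direction_zero)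
qed

end
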